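(* Let $\{|j\rangle\}_{j=1}^n$ be a fixed orthonormal (reference) basis of an $n$-dimensional Hilbert space, and let $Z_1,\dots,Z_n$ be Hermitian operators, all diagonal in the reference basis, with $\operatorname{tr}Z_jZ_k=\delta_{jk}$. For a state $\rho$, define \[ \mathcal{C}(\rho):=\min_{\{p_l,|\psi_l\rangle\}}\sum_lp_l\,\mathcal{F}_1\Big(e^{i\sum_j\theta_jZ_j}|\psi_l\rangle\langle\psi_l|e^{-i\sum_j\theta_jZ_j}\Big), \] where the minimum is over all ensemble decompositions $\rho=\sum_lp_l|\psi_l\rangle\langle\psi_l|$. Then \[ \mathcal{C}(\rho)=\frac4n\Big(1-\max_{\{p_l,|\psi_l\rangle\}}\sum_lp_l\sum_{j=1}^n|\langle j|\psi_l\rangle|^4\Big), \] with the maximum again over all ensemble decompositions of $\rho$.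
   Context: For a parametric family $\varrho_\theta$, $\theta\in\mathbb{R}^n$, the arithmetic-mean QFI is $\mathcal{F}_1(\varrho_\theta):=\frac1n\operatorname{tr}F(\varrho_\theta)$, where $F$ is the SLD-based QFI matrix $[F]_{jk}=\operatorname{Re}\operatorname{tr}(L_jL_k\varrho_\theta)$, with Hermitian $L_j$ satisfying $\partial_j\varrho_\theta=(L_j\varrho_\theta+\varrho_\theta L_j)/2$. (For the unitary families above, $F$ does not depend on $\theta$.) *)

theory Defs
  imports "HOL-Analysis.Analysis"
begin

text \<open>Matrices are complex^'m^'m, indexed by the reference basis (type 'm).\<close>

definition cadj :: "complex^'m^'m \<Rightarrow> complex^'m^'m" where
  "cadj A = (\<chi> i j. cnj (A $ j $ i))"

definition hermitian_mat :: "complex^'m^'m \<Rightarrow> bool" where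
  "hermitian_mat A \<longleftrightarrow> cadj A = A"

definition diagonal_mat :: "complex^'m^'m \<Rightarrow> bool" where
  "diagonal_mat A \<longleftrightarrow> (\<forall>a b. a \<noteq> b \<longrightarrow> A $ a $ b = 0)"

definition density_mat :: "complex^'m^'m \<Rightarrow> bool" where
  "density_mat \<rho> \<longleftrightarrow> hermitian_mat \<rho> \<and>
     (\<forall>v::complex^'m. 0 \<le> Re (\<Sum>a\<in>UNIV. \<Sum>b\<in>UNIV. cnj (v $ a) * \<rho> $ a $ b * v $ b)) \<and>
     trace \<rho> = 1"

definition proj :: "complex^'m \<Rightarrow> complex^'m^'m" where
  "proj \<psi> = (\<chi> a b. \<psi> $ a * cnj (\<psi> $ b))"

definition is_SLD :: "(real^'n \<Rightarrow> complex^'m^'m) \<Rightarrow> real^'n \<Rightarrow> 'n \<Rightarrow> complex^'m^'m \<Rightarrow> bool" where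
  "is_SLD \<rho> \<theta> j L \<longleftrightarrow> hermitian_mat L \<and>
     ((\<lambda>t. \<rho> (\<theta> + t *\<^sub>R axis j 1)) has_vector_derivative
        ((1/2::real) *\<^sub>R (L ** \<rho> \<theta> + \<rho> \<theta> ** L))) (at 0)"

definition SLD :: "(real^'n \<Rightarrow> complex^'m^'m) \<Rightarrow> real^'n \<Rightarrow> 'n \<Rightarrow> complex^'m^'m" where
  "SLD \<rho> \<theta> j = (SOME L. is_SLD \<rho> \<theta> j L)"

definition QFI :: "(real^'n \<Rightarrow> complex^'m^'m) \<Rightarrow> real^'n \<Rightarrow> 'n \<Rightarrow> 'n \<Rightarrow> real" where
  "QFI \<rho> \<theta> j k = Re (trace (SLD \<rho> \<theta> j ** SLD \<rho> \<theta> k ** \<rho> \<theta>))"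

definition QFI_mean :: "(real^'n \<Rightarrow> complex^'m^'m) \<Rightarrow> real^'n \<Rightarrow> real" where
  "QFI_mean \<rho> \<theta> = (\<Sum>j\<in>UNIV. QFI \<rho> \<theta> j j) / real CARD('n)"

text \<open>exp(i sum_j theta_j Z_j) for Z_j diagonal in the reference basis: the exponential of a
  diagonal matrix is the diagonal matrix of the exponentials of the entries.\<close>
definition Uphase :: "('n \<Rightarrow> complex^'m^'m) \<Rightarrow> real^'n \<Rightarrow> complex^'m^'m" where
  "Uphase Z \<theta> = (\<chi> a b. if a = b then exp (\<i> * (\<Sum>j\<in>UNIV. complex_of_real (\<theta> $ j) * Z j $ a $ a)) else 0)"

definition ensemble :: "complex^'m^'m \<Rightarrow> (real \<times> (complex^'m)) list \<Rightarrow> bool" where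
  "ensemble \<rho> E \<longleftrightarrow> (\<forall>(p, \<psi>)\<in>set E. 0 \<le> p \<and> norm \<psi> = 1) \<and>
     (\<Sum>(p, \<psi>)\<leftarrow>E. p) = 1 \<and>
     (\<Sum>(p, \<psi>)\<leftarrow>E. p *\<^sub>R proj \<psi>) = \<rho>"

text \<open>The quantity C(rho) (the SLD-QFI of the encoded family evaluated at parameter theta;
  it does not depend on theta).\<close>
definition Ccoh :: "('m \<Rightarrow> complex^'m^'m) \<Rightarrow> real^'m \<Rightarrow> complex^'m^'m \<Rightarrow> real" where
  "Ccoh Z \<theta> \<rho> = (INF E \<in> {E. ensemble \<rho> E}.
      (\<Sum>(p, \<psi>)\<leftarrow>E. p * QFI_mean (\<lambda>\<theta>'. Uphase Z \<theta>' ** proj \<psi> ** cadj (Uphase Z \<theta>')) \<theta>))"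

end

theory Submission
  imports Defs
begin

(* A pure state phi moved by the diagonal unitary exp(i t diag z) has derivative
   D = i [diag z, |phi><phi|] at t = 0.  Since |phi><phi| is a projection, 2D is an SLD, and
   applying the SLD equation to phi shows L phi = 2 D phi for every SLD L, so the QFI is
   4 |D phi|^2 = 4 Var_phi (diag z).  The real diagonals of trace-orthonormal diagonal Z_1..Z_n
   form an orthogonal n x n matrix, so its columns are orthonormal as well; with
   p_a = |<a|phi>|^2 this gives  sum_j Var_phi (Z_j) = sum_a p_a - sum_a p_a^2
   = 1 - sum_a |<a|phi>|^4.  Averaged over an ensemble, the cost is therefore the decreasing
   continuous function x |-> 4/n (1 - x) of the averaged fourth moments, which turns the
   infimum over ensembles into the supremum.  Ensembles exist because repeated Schur
   complements split a density matrix into rank-one projections. *)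

section \<open>Hermitian matrices, inner and outer products\<close>

lemma hermitian_mat_cnj_entry: "hermitian_mat A \<Longrightarrow> cnj (A $ a $ b) = A $ b $ a"
  unfolding hermitian_mat_def cadj_def by (metis vec_lambda_beta)

lemma hermitian_mat_diag_real: "hermitian_mat A \<Longrightarrow> A $ a $ a = of_real (Re (A $ a $ a))"
  using hermitian_mat_cnj_entry[of A a a] by (simp add: complex_eq_iff)

lemma hermitian_mat_scaleR: "hermitian_mat A \<Longrightarrow> hermitian_mat (r *\<^sub>R A)"
  by (simp add: hermitian_mat_def cadj_def vec_eq_iff scaleR_conv_of_real[where 'a=complex])

lemma hermitian_mat_diff: "hermitian_mat A \<Longrightarrow> hermitian_mat B \<Longrightarrow> hermitian_mat (A - B)"
  by (simp add: hermitian_mat_def cadj_def vec_eq_iff)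

lemma hermitian_proj: "hermitian_mat (proj \<psi>)"
  by (simp add: hermitian_mat_def cadj_def proj_def vec_eq_iff)

lemma cnj_mult_self: "cnj z * z = of_real (cmod z ^ 2)"
  by (metis complex_norm_square mult.commute)

lemma norm_vec_power2: "norm (v::complex^'n) ^ 2 = (\<Sum>a\<in>UNIV. cmod (v $ a) ^ 2)"
  by (simp add: norm_vec_def L2_set_def sum_nonneg)

lemma unit_vec_sum_power2: "norm (\<psi>::complex^'n) = 1 \<Longrightarrow> (\<Sum>a\<in>UNIV. cmod (\<psi> $ a) ^ 2) = 1"
  by (simp add: norm_vec_power2[symmetric])

definition cinner :: "complex^'n \<Rightarrow> complex^'n \<Rightarrow> complex" where
  "cinner u v = (\<Sum>a\<in>UNIV. cnj (u $ a) * v $ a)"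

definition outer :: "complex^'n \<Rightarrow> complex^'n \<Rightarrow> complex^'n^'n" where
  "outer u v = (\<chi> a b. u $ a * cnj (v $ b))"

lemma proj_eq_outer: "proj \<psi> = outer \<psi> \<psi>"
  by (simp add: proj_def outer_def)

lemma cinner_self: "cinner v v = of_real (norm v ^ 2)"
  unfolding cinner_def norm_vec_power2 of_real_sum complex_norm_square
  by (simp add: mult.commute)

lemma cinner_add_left: "cinner (u + v) w = cinner u w + cinner v w"
  by (simp add: cinner_def distrib_right sum.distrib)

lemma cinner_add_right: "cinner u (v + w) = cinner u v + cinner u w"
  by (simp add: cinner_def distrib_left sum.distrib)

lemma cinner_scalar_left: "cinner (c *s u) v = cnj c * cinner u v"
  by (simp add: cinner_def sum_distrib_left mult_ac)

lemma cinner_scalar_right: "cinner u (c *s v) = c * cinner u v"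
  by (simp add: cinner_def sum_distrib_left mult_ac)

lemma cinner_scaleR_right: "cinner u (r *\<^sub>R v) = of_real r * cinner u v"
  by (simp add: cinner_def sum_distrib_left scaleR_conv_of_real[where 'a=complex] mult_ac)

lemma cinner_diff_right: "cinner u (v - w) = cinner u v - cinner u w"
  by (simp add: cinner_def right_diff_distrib sum_subtractf)

lemma cinner_commute_cnj: "cinner u v = cnj (cinner v u)"
  by (simp add: cinner_def mult.commute)

lemma cinner_hermitian:
  assumes "hermitian_mat A"
  shows "cinner (A *v u) v = cinner u (A *v v)"
proof -
  have "cinner (A *v u) v = (\<Sum>a\<in>UNIV. \<Sum>b\<in>UNIV. cnj (u $ b) * A $ b $ a * v $ a)"
    unfolding cinner_def matrix_vector_mult_def
    by (simp add: hermitian_mat_cnj_entry[OF assms] sum_distrib_right sum_distrib_left mult_ac)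
  also have "\<dots> = cinner u (A *v v)"
    unfolding cinner_def matrix_vector_mult_def
    by (subst sum.swap) (simp add: sum_distrib_left mult_ac)
  finally show ?thesis .
qed

lemma scaleR_matrix_mult_vec: "(r *\<^sub>R A) *v v = r *\<^sub>R (A *v v)"
  for A :: "complex^'m^'n"
  by (simp add: matrix_vector_mult_def vec_eq_iff scaleR_sum_right)

lemma matrix_mult_outer: "A ** outer u v = outer (A *v u) v"
  by (simp add: outer_def matrix_matrix_mult_def matrix_vector_mult_def vec_eq_iff
      sum_distrib_right sum_distrib_left mult_ac)

lemma outer_mult_cadj: "outer u v ** cadj A = outer u (A *v v)"
  by (simp add: outer_def cadj_def matrix_matrix_mult_def matrix_vector_mult_def vec_eq_iff
      sum_distrib_left mult_ac)

lemma outer_mult_hermitian: "hermitian_mat A \<Longrightarrow> outer u v ** A = outer u (A *v v)"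
  using outer_mult_cadj[of u v A] by (simp add: hermitian_mat_def)

lemma matrix_conj_proj: "A ** proj \<psi> ** cadj A = proj (A *v \<psi>)"
  by (simp add: proj_eq_outer matrix_mult_outer outer_mult_cadj)

lemma outer_mult_vec: "outer u v *v w = cinner v w *s u"
  by (simp add: outer_def cinner_def matrix_vector_mult_def vec_eq_iff sum_distrib_left mult_ac)

lemma trace_outer: "trace (outer u v) = cinner v u"
  by (simp add: outer_def cinner_def trace_def mult.commute)

lemma trace_square_mult_proj:
  assumes "hermitian_mat L"
  shows "trace (L ** L ** proj \<phi>) = of_real (norm (L *v \<phi>) ^ 2)"
proof -
  have "trace (L ** L ** proj \<phi>) = cinner \<phi> (L *v (L *v \<phi>))"
    by (simp add: proj_eq_outer matrix_mult_outer trace_outer matrix_vector_mul_assoc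
        flip: matrix_mul_assoc)
  also have "\<dots> = cinner (L *v \<phi>) (L *v \<phi>)"
    by (simp add: cinner_hermitian[OF assms])
  finally show ?thesis by (simp add: cinner_self)
qed

section \<open>The SLD quantum Fisher information of a phase-encoded pure state\<close>

lemma pure_state_SLD_mult_vec:
  assumes L: "hermitian_mat L" and unit: "norm \<phi> = 1"
    and SLD: "(1/2::real) *\<^sub>R (L ** proj \<phi> + proj \<phi> ** L) = D"
    and D: "cinner \<phi> (D *v \<phi>) = 0"
  shows "L *v \<phi> = 2 *\<^sub>R (D *v \<phi>)"
proof -
  define c where "c = cinner \<phi> (L *v \<phi>)"
  have D\<phi>: "D *v \<phi> = (1/2::real) *\<^sub>R (L *v \<phi> + c *s \<phi>)"
    unfolding SLD[symmetric] c_def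
    by (simp add: proj_eq_outer matrix_mult_outer outer_mult_hermitian[OF L] outer_mult_vec
        cinner_self unit cinner_hermitian[OF L] matrix_vector_mult_add_rdistrib
        scaleR_matrix_mult_vec)
  have "c = 0"
    using D unfolding D\<phi> by (simp add: cinner_scaleR_right cinner_add_right cinner_scalar_right
        cinner_self unit c_def)
  then show ?thesis
    unfolding D\<phi> by simp
qed

lemma pure_state_SLD_QFI:
  assumes L: "hermitian_mat L" and unit: "norm \<phi> = 1"
    and SLD: "(1/2::real) *\<^sub>R (L ** proj \<phi> + proj \<phi> ** L) = D"
    and D: "cinner \<phi> (D *v \<phi>) = 0"
  shows "Re (trace (L ** L ** proj \<phi>)) = 4 * norm (D *v \<phi>) ^ 2"
proof -
  have "norm (L *v \<phi>) = 2 * norm (D *v \<phi>)"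
    unfolding pure_state_SLD_mult_vec[OF assms] by simp
  then show ?thesis
    by (simp add: trace_square_mult_proj[OF L] power_mult_distrib)
qed

(* i [diag z, rho]: the derivative at t = 0 of exp(i t diag z) rho exp(-i t diag z). *)
definition diag_commutator :: "('n \<Rightarrow> real) \<Rightarrow> complex^'n^'n \<Rightarrow> complex^'n^'n" where
  "diag_commutator z \<rho> = (\<chi> a b. \<i> * of_real (z a - z b) * \<rho> $ a $ b)"

lemma hermitian_diag_commutator:
  "hermitian_mat \<rho> \<Longrightarrow> hermitian_mat (diag_commutator z \<rho>)"
  unfolding hermitian_mat_def cadj_def diag_commutator_def
  by (simp add: vec_eq_iff hermitian_mat_cnj_entry algebra_simps)

lemma diag_commutator_proj_mult_vec:
  assumes unit: "norm \<phi> = 1"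
  shows "diag_commutator z (proj \<phi>) *v \<phi>
    = (\<chi> a. \<i> * of_real (z a - (\<Sum>b\<in>UNIV. z b * cmod (\<phi> $ b) ^ 2)) * \<phi> $ a)"
proof -
  have "\<i> * of_real (z a - z b) * (\<phi> $ a * cnj (\<phi> $ b)) * \<phi> $ b
      = \<i> * \<phi> $ a * of_real ((z a - z b) * cmod (\<phi> $ b) ^ 2)" for a b
    by (simp only: of_real_mult flip: cnj_mult_self) (simp only: mult_ac)
  then have "(\<Sum>b\<in>UNIV. \<i> * of_real (z a - z b) * (\<phi> $ a * cnj (\<phi> $ b)) * \<phi> $ b)
      = \<i> * \<phi> $ a * of_real (\<Sum>b\<in>UNIV. (z a - z b) * cmod (\<phi> $ b) ^ 2)" for a
    by (simp only: of_real_sum sum_distrib_left)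
  moreover have "(\<Sum>b\<in>UNIV. (z a - z b) * cmod (\<phi> $ b) ^ 2)
      = z a - (\<Sum>b\<in>UNIV. z b * cmod (\<phi> $ b) ^ 2)" for a
    by (simp add: left_diff_distrib sum_subtractf unit_vec_sum_power2[OF unit]
        flip: sum_distrib_left)
  ultimately show ?thesis
    by (simp add: diag_commutator_def proj_def matrix_vector_mult_def vec_eq_iff mult_ac)
qed

lemma cinner_diag_commutator_proj:
  assumes unit: "norm \<phi> = 1"
  shows "cinner \<phi> (diag_commutator z (proj \<phi>) *v \<phi>) = 0"
proof -
  define m where "m = (\<Sum>b\<in>UNIV. z b * cmod (\<phi> $ b) ^ 2)"
  have "cinner \<phi> (diag_commutator z (proj \<phi>) *v \<phi>)
      = \<i> * of_real (\<Sum>a\<in>UNIV. (z a - m) * cmod (\<phi> $ a) ^ 2)"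
  proof -
    have summand: "cnj (\<phi> $ a) * (\<i> * of_real (z a - m) * \<phi> $ a)
        = \<i> * of_real ((z a - m) * cmod (\<phi> $ a) ^ 2)" for a
      by (simp only: of_real_mult flip: cnj_mult_self) (simp only: mult_ac)
    have "cinner \<phi> (diag_commutator z (proj \<phi>) *v \<phi>)
        = (\<Sum>a\<in>UNIV. \<i> * of_real ((z a - m) * cmod (\<phi> $ a) ^ 2))"
      unfolding diag_commutator_proj_mult_vec[OF unit] cinner_def m_def[symmetric]
        vec_lambda_beta summand ..
    then show ?thesis
      by (simp only: of_real_sum sum_distrib_left)
  qed
  also have "(\<Sum>a\<in>UNIV. (z a - m) * cmod (\<phi> $ a) ^ 2) = 0"
    by (simp add: left_diff_distrib sum_subtractf unit_vec_sum_power2[OF unit] m_def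
        flip: sum_distrib_left)
  finally show ?thesis by simp
qed

lemma norm_diag_commutator_proj_mult_vec:
  assumes unit: "norm \<phi> = 1"
  shows "norm (diag_commutator z (proj \<phi>) *v \<phi>) ^ 2
    = (\<Sum>a\<in>UNIV. z a ^ 2 * cmod (\<phi> $ a) ^ 2) - (\<Sum>a\<in>UNIV. z a * cmod (\<phi> $ a) ^ 2) ^ 2"
proof -
  define m where "m = (\<Sum>b\<in>UNIV. z b * cmod (\<phi> $ b) ^ 2)"
  have "norm (diag_commutator z (proj \<phi>) *v \<phi>) ^ 2 = (\<Sum>a\<in>UNIV. (z a - m) ^ 2 * cmod (\<phi> $ a) ^ 2)"
    unfolding norm_vec_power2 diag_commutator_proj_mult_vec[OF unit] m_def[symmetric]
    by (simp add: norm_mult power_mult_distrib flip: of_real_diff)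
  also have "\<dots> = (\<Sum>a\<in>UNIV. z a ^ 2 * cmod (\<phi> $ a) ^ 2)
      - 2 * m * (\<Sum>a\<in>UNIV. z a * cmod (\<phi> $ a) ^ 2) + m ^ 2 * (\<Sum>a\<in>UNIV. cmod (\<phi> $ a) ^ 2)"
    by (simp add: power2_diff algebra_simps sum.distrib sum_subtractf sum_distrib_left)
  also have "\<dots> = (\<Sum>a\<in>UNIV. z a ^ 2 * cmod (\<phi> $ a) ^ 2) - m ^ 2"
    unfolding unit_vec_sum_power2[OF unit] m_def by (simp add: power2_eq_square)
  finally show ?thesis
    unfolding m_def .
qed

lemma diag_commutator_proj_anticommutator:
  fixes z :: "'n::finite \<Rightarrow> real"
  assumes unit: "norm \<phi> = 1"
  defines "D \<equiv> diag_commutator z (proj \<phi>)"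
  shows "D ** proj \<phi> + proj \<phi> ** D = D"
proof -
  have "hermitian_mat D"
    unfolding D_def by (intro hermitian_diag_commutator hermitian_proj)
  then have "D ** proj \<phi> + proj \<phi> ** D = outer (D *v \<phi>) \<phi> + outer \<phi> (D *v \<phi>)"
    by (simp add: proj_eq_outer matrix_mult_outer outer_mult_hermitian)
  also have "\<dots> = D"
    unfolding D_def diag_commutator_proj_mult_vec[OF unit]
    by (simp add: outer_def diag_commutator_def proj_def vec_eq_iff algebra_simps)
  finally show ?thesis .
qed

lemma Uphase_mult_vec:
  assumes herm: "\<And>j. hermitian_mat (Z j)"
  shows "Uphase Z \<theta> *v \<psi> = (\<chi> a. cis (\<Sum>j\<in>UNIV. \<theta> $ j * Re (Z j $ a $ a)) * \<psi> $ a)"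
proof -
  have "(\<Sum>j\<in>UNIV. of_real (\<theta> $ j) * Z j $ a $ a)
      = of_real (\<Sum>j\<in>UNIV. \<theta> $ j * Re (Z j $ a $ a))" for a
    by (subst hermitian_mat_diag_real[OF herm]) simp
  then show ?thesis
    by (simp add: Uphase_def matrix_vector_mult_def vec_eq_iff cis_conv_exp if_distrib
        if_distribR cong: if_cong)
qed

lemma phase_shift_axis:
  "(\<Sum>k\<in>UNIV. (\<theta> + t *\<^sub>R axis j 1) $ k * r k) = (\<Sum>k\<in>UNIV. \<theta> $ k * r k) + t * r j"
proof -
  have "(\<theta> + t *\<^sub>R axis j 1) $ k * r k = \<theta> $ k * r k + (if k = j then t * r j else 0)" for k
    by (simp add: axis_def distrib_right)
  then show ?thesis
    by (simp add: sum.distrib)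
qed

lemma proj_phase_shift:
  assumes herm: "\<And>j. hermitian_mat (Z j)"
  shows "proj (Uphase Z (\<theta> + t *\<^sub>R axis j 1) *v \<psi>) $ a $ b
    = proj (Uphase Z \<theta> *v \<psi>) $ a $ b * cis (t * (Re (Z j $ a $ a) - Re (Z j $ b $ b)))"
proof -
  have "cis (x + t * r) * cis (- (y + t * s)) = cis x * cis (- y) * cis (t * (r - s))"
    for x y r s :: real
    by (simp add: cis_mult algebra_simps)
  then have shift: "cis (x + t * r) * p * cnj (cis (y + t * s) * q)
      = cis x * p * cnj (cis y * q) * cis (t * (r - s))" for x y r s :: real and p q
    by (simp add: cis_cnj)
  show ?thesis
    unfolding Uphase_mult_vec[OF herm] proj_def vec_lambda_beta phase_shift_axis
    by (rule shift)
qed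

lemma has_vector_derivative_vec:
  fixes f :: "real \<Rightarrow> 'a::real_normed_vector^'n"
  assumes "\<And>i. ((\<lambda>t. f t $ i) has_vector_derivative f' $ i) (at x)"
  shows "(f has_vector_derivative f') (at x)"
  using assms unfolding has_vector_derivative_def has_derivative_at_within
  by (auto intro!: vec_tendstoI bounded_linear_scaleR_left)

lemma has_vector_derivative_cis_at_0:
  "((\<lambda>t. c * cis (t * x)) has_vector_derivative c * (\<i> * of_real x)) (at 0)"
proof -
  have "((\<lambda>s. c * exp (s * (\<i> * of_real x))) has_field_derivative c * (\<i> * of_real x))
      (at (of_real 0))"
    by (auto intro!: derivative_eq_intros)
  then show ?thesis
    using has_vector_derivative_real_field by (fastforce simp: cis_conv_exp mult_ac)
qed

lemma has_vector_derivative_phase_family: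
  assumes herm: "\<And>j. hermitian_mat (Z j)"
  shows "((\<lambda>t. proj (Uphase Z (\<theta> + t *\<^sub>R axis j 1) *v \<psi>)) has_vector_derivative
    diag_commutator (\<lambda>a. Re (Z j $ a $ a)) (proj (Uphase Z \<theta> *v \<psi>))) (at 0)"
proof (intro has_vector_derivative_vec)
  fix a b
  show "((\<lambda>t. proj (Uphase Z (\<theta> + t *\<^sub>R axis j 1) *v \<psi>) $ a $ b) has_vector_derivative
      diag_commutator (\<lambda>a. Re (Z j $ a $ a)) (proj (Uphase Z \<theta> *v \<psi>)) $ a $ b) (at 0)"
    unfolding proj_phase_shift[OF herm] diag_commutator_def vec_lambda_beta
    using has_vector_derivative_cis_at_0[of "proj (Uphase Z \<theta> *v \<psi>) $ a $ b"
        "Re (Z j $ a $ a) - Re (Z j $ b $ b)"]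
    by (simp only: mult_ac)
qed

lemma QFI_phase_family:
  fixes Z :: "'k::finite \<Rightarrow> complex^'m::finite^'m"
  assumes herm: "\<And>j. hermitian_mat (Z j)" and unit: "norm \<psi> = 1"
  shows "QFI (\<lambda>\<theta>'. Uphase Z \<theta>' ** proj \<psi> ** cadj (Uphase Z \<theta>')) \<theta> j j
    = 4 * ((\<Sum>a\<in>UNIV. Re (Z j $ a $ a) ^ 2 * cmod (\<psi> $ a) ^ 2)
           - (\<Sum>a\<in>UNIV. Re (Z j $ a $ a) * cmod (\<psi> $ a) ^ 2) ^ 2)"
proof -
  define \<rho> where "\<rho> = (\<lambda>\<theta>'. proj (Uphase Z \<theta>' *v \<psi>))"
  define \<phi> where "\<phi> = Uphase Z \<theta> *v \<psi>"
  define z where "z a = Re (Z j $ a $ a)" for a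
  define D where "D = diag_commutator z (proj \<phi>)"
  have cmod_\<phi>: "cmod (\<phi> $ a) = cmod (\<psi> $ a)" for a
    by (simp add: \<phi>_def Uphase_mult_vec[OF herm] norm_mult)
  have unit_\<phi>: "norm \<phi> = 1"
    using unit by (simp add: norm_vec_def cmod_\<phi>)
  have deriv: "((\<lambda>t. \<rho> (\<theta> + t *\<^sub>R axis j 1)) has_vector_derivative D) (at 0)"
    unfolding \<rho>_def D_def \<phi>_def z_def by (rule has_vector_derivative_phase_family[OF herm])
  have "hermitian_mat D" "D ** proj \<phi> + proj \<phi> ** D = D"
    unfolding D_def
    by (intro hermitian_diag_commutator hermitian_proj
        diag_commutator_proj_anticommutator[OF unit_\<phi>])+
  then have "is_SLD \<rho> \<theta> j (2 *\<^sub>R D)"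
    using deriv unfolding is_SLD_def
    by (simp add: hermitian_mat_scaleR matrix_scalar_ac \<rho>_def
        flip: \<phi>_def scalar_matrix_assoc scaleR_right_distrib)
  \<comment> \<open>SLD picks an SLD by Hilbert choice: 2D shows the choice is well defined, and
      pure_state_SLD_QFI applies to whichever SLD is picked.\<close>
  then have SLD: "is_SLD \<rho> \<theta> j (SLD \<rho> \<theta> j)"
    unfolding SLD_def by (rule someI)
  define L where "L = SLD \<rho> \<theta> j"
  have L: "hermitian_mat L"
    using SLD by (simp add: is_SLD_def L_def)
  have "(1/2::real) *\<^sub>R (L ** proj \<phi> + proj \<phi> ** L) = D"
    using SLD deriv vector_derivative_unique_at unfolding is_SLD_def L_def \<rho>_def \<phi>_def by blast
  then have "QFI \<rho> \<theta> j j = 4 * norm (D *v \<phi>) ^ 2"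
    using pure_state_SLD_QFI[OF L unit_\<phi>] cinner_diag_commutator_proj[OF unit_\<phi>]
    by (simp add: QFI_def L_def \<rho>_def D_def flip: \<phi>_def)
  also have "\<dots> = 4 * ((\<Sum>a\<in>UNIV. z a ^ 2 * cmod (\<psi> $ a) ^ 2)
           - (\<Sum>a\<in>UNIV. z a * cmod (\<psi> $ a) ^ 2) ^ 2)"
    by (simp add: D_def norm_diag_commutator_proj_mult_vec[OF unit_\<phi>] cmod_\<phi>)
  finally show ?thesis
    by (simp add: matrix_conj_proj \<rho>_def z_def)
qed

lemma trace_mult_diagonal:
  assumes "hermitian_mat A" "hermitian_mat B" "diagonal_mat A"
  shows "trace (A ** B) = of_real (\<Sum>a\<in>UNIV. Re (A $ a $ a) * Re (B $ a $ a))"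
proof -
  have "(\<Sum>c\<in>UNIV. A $ a $ c * B $ c $ a) = A $ a $ a * B $ a $ a" for a
    using assms(3) unfolding diagonal_mat_def
    by (subst sum.remove[of _ a]) (auto intro: sum.neutral)
  then have "trace (A ** B) = (\<Sum>a\<in>UNIV. A $ a $ a * B $ a $ a)"
    by (simp add: trace_def matrix_matrix_mult_def)
  also have "\<dots> = of_real (\<Sum>a\<in>UNIV. Re (A $ a $ a) * Re (B $ a $ a))"
    by (subst (1 2) hermitian_mat_diag_real[OF assms(1)], subst (1 2) hermitian_mat_diag_real[OF assms(2)])
      simp
  finally show ?thesis .
qed

lemma orthogonal_matrix_diagonals:
  fixes Z :: "'n::finite \<Rightarrow> complex^'n^'n"
  assumes herm: "\<And>j. hermitian_mat (Z j)"
    and diag: "\<And>j. diagonal_mat (Z j)"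
    and orth: "\<And>j k. trace (Z j ** Z k) = (if j = k then 1 else 0)"
  shows "orthogonal_matrix (\<chi> j a. Re (Z j $ a $ a))"
proof -
  define M :: "real^'n^'n" where "M = (\<chi> j a. Re (Z j $ a $ a))"
  have "(\<Sum>a\<in>UNIV. Re (Z j $ a $ a) * Re (Z k $ a $ a)) = (if j = k then 1 else 0)" for j k
    using orth[of j k] unfolding trace_mult_diagonal[OF herm herm diag]
    by (simp del: of_real_sum of_real_mult split: if_splits)
  then have "transpose (transpose M) ** transpose M = mat 1"
    by (simp add: M_def vec_eq_iff matrix_matrix_mult_def transpose_def mat_def)
  then show ?thesis
    unfolding M_def[symmetric] using orthogonal_matrix orthogonal_matrix_transpose by blast
qed

lemma norm_real_vec_power2: "norm (x::real^'n) ^ 2 = (\<Sum>a\<in>UNIV. x $ a ^ 2)"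
  by (simp add: norm_vec_def L2_set_def sum_nonneg)

lemma QFI_mean_phase_family:
  fixes Z :: "'n::finite \<Rightarrow> complex^'n^'n"
  assumes herm: "\<And>j. hermitian_mat (Z j)"
    and diag: "\<And>j. diagonal_mat (Z j)"
    and orth: "\<And>j k. trace (Z j ** Z k) = (if j = k then 1 else 0)"
    and unit: "norm \<psi> = 1"
  shows "QFI_mean (\<lambda>\<theta>'. Uphase Z \<theta>' ** proj \<psi> ** cadj (Uphase Z \<theta>')) \<theta>
    = 4 / real CARD('n) * (1 - (\<Sum>a\<in>UNIV. cmod (\<psi> $ a) ^ 4))"
proof -
  define M :: "real^'n^'n" where "M = (\<chi> j a. Re (Z j $ a $ a))"
  define p :: "real^'n" where "p = (\<chi> a. cmod (\<psi> $ a) ^ 2)"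
  have M: "orthogonal_matrix M"
    unfolding M_def by (rule orthogonal_matrix_diagonals[OF herm diag orth])
  have "(transpose M ** M) $ a $ a = 1" for a
    using M by (simp add: orthogonal_matrix_def mat_def)
  then have "(\<Sum>j\<in>UNIV. Re (Z j $ a $ a) ^ 2) = 1" for a
    by (simp add: M_def matrix_matrix_mult_def transpose_def power2_eq_square)
  then have second_moments: "(\<Sum>j\<in>UNIV. \<Sum>a\<in>UNIV. Re (Z j $ a $ a) ^ 2 * cmod (\<psi> $ a) ^ 2) = 1"
    by (subst sum.swap) (simp add: unit_vec_sum_power2[OF unit] flip: sum_distrib_right)
  have "orthogonal_transformation (\<lambda>x. M *v x)"
    using M by (simp add: orthogonal_transformation_matrix)
  then have "norm (M *v p) ^ 2 = norm p ^ 2"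
    by (simp add: orthogonal_transformation)
  then have first_moments:
    "(\<Sum>j\<in>UNIV. (\<Sum>a\<in>UNIV. Re (Z j $ a $ a) * cmod (\<psi> $ a) ^ 2) ^ 2) = (\<Sum>a\<in>UNIV. cmod (\<psi> $ a) ^ 4)"
    unfolding norm_real_vec_power2
    by (simp add: M_def p_def matrix_vector_mult_def flip: power_mult)
  show ?thesis
    unfolding QFI_mean_def QFI_phase_family[OF herm unit]
    by (simp add: sum_subtractf second_moments first_moments flip: sum_distrib_left)
qed

section \<open>Ensemble decompositions\<close>

definition psd_mat :: "complex^'n^'n \<Rightarrow> bool" where
  "psd_mat A \<longleftrightarrow> (\<forall>v. 0 \<le> Re (cinner v (A *v v)))"

lemma density_mat_psd: "density_mat \<rho> \<Longrightarrow> psd_mat \<rho>"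
  by (simp add: density_mat_def psd_mat_def cinner_def matrix_vector_mult_def sum_distrib_left
      mult.assoc)

lemma matrix_vector_mult_scalar: "A *v (c *s x) = c *s (A *v x)"
  for A :: "complex^'n^'m"
  by (simp add: matrix_vector_mult_def vec_eq_iff sum_distrib_left mult_ac)

lemma cinner_axis_left: "cinner (axis a 1) v = v $ a"
  by (simp add: cinner_def axis_def if_distrib if_distribR cong: if_cong)

lemma matrix_vector_mult_axis: "A *v axis a 1 = (\<chi> i. A $ i $ a)"
  for A :: "complex^'n^'m"
  by (simp add: matrix_vector_mult_def axis_def vec_eq_iff if_distrib if_distribR
      cong: if_cong)

lemma cinner_column_hermitian:
  assumes "hermitian_mat A"
  shows "cinner v (\<chi> i. A $ i $ a) = cnj ((A *v v) $ a)"
  by (simp add: cinner_def matrix_vector_mult_def hermitian_mat_cnj_entry[OF assms] mult.commute)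

lemma quadratic_form_shift_axis:
  assumes "hermitian_mat A"
  shows "cinner (w + t *s axis a 1) (A *v (w + t *s axis a 1))
    = cinner w (A *v w) + t * cnj ((A *v w) $ a) + cnj t * (A *v w) $ a + cnj t * t * A $ a $ a"
proof -
  have "A *v (w + t *s axis a 1) = A *v w + t *s (\<chi> i. A $ i $ a)"
    by (simp add: matrix_vector_right_distrib matrix_vector_mult_scalar matrix_vector_mult_axis)
  then show ?thesis
    by (simp add: cinner_add_right cinner_add_left cinner_scalar_right cinner_scalar_left
        cinner_axis_left cinner_column_hermitian[OF assms] hermitian_mat_cnj_entry[OF assms]
        algebra_simps)
qed

lemma psd_mat_zero_diag:
  assumes herm: "hermitian_mat A" and psd: "psd_mat A" and zero: "A $ a $ a = 0"
  shows "A $ a $ b = 0"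
proof (rule ccontr)
  define s where "s = A $ a $ b"
  assume "A $ a $ b \<noteq> 0"
  then have s_pos: "cmod s ^ 2 > 0"
    by (simp add: s_def)
  define k where "k = (\<bar>Re (A $ b $ b)\<bar> + 1) / (2 * cmod s ^ 2)"
  define t where "t = - (of_real k * s)"
  have "cinner (axis b 1 + t *s axis a 1) (A *v (axis b 1 + t *s axis a 1))
      = A $ b $ b - of_real (2 * k * cmod s ^ 2)"
    unfolding quadratic_form_shift_axis[OF herm]
    by (simp add: cinner_axis_left matrix_vector_mult_axis zero t_def s_def algebra_simps
        flip: complex_norm_square)
  then have "Re (cinner (axis b 1 + t *s axis a 1) (A *v (axis b 1 + t *s axis a 1)))
      = Re (A $ b $ b) - 2 * k * cmod s ^ 2"
    by (simp del: of_real_mult of_real_power)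
  also have "\<dots> = Re (A $ b $ b) - (\<bar>Re (A $ b $ b)\<bar> + 1)"
    using s_pos by (simp add: k_def field_simps)
  also have "\<dots> < 0"
    by simp
  finally show False
    using psd by (simp add: psd_mat_def not_less[symmetric])
qed

lemma psd_mat_schur_complement:
  assumes herm: "hermitian_mat A" and psd: "psd_mat A"
    and r: "A $ a $ a = of_real r" "r > 0"
  shows "psd_mat (A - (1/r) *\<^sub>R proj (\<chi> i. A $ i $ a))"
  unfolding psd_mat_def
proof
  fix w
  define s where "s = (A *v w) $ a"
  define t where "t = - s / of_real r"
  have "cinner (\<chi> i. A $ i $ a) w = s"
    by (simp add: cinner_commute_cnj[of _ w] cinner_column_hermitian[OF herm] s_def)
  then have "cinner w ((A - (1/r) *\<^sub>R proj (\<chi> i. A $ i $ a)) *v w)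
      = cinner w (A *v w) - s * cnj s / of_real r"
    by (simp add: matrix_vector_mult_diff_rdistrib scaleR_matrix_mult_vec proj_eq_outer
        outer_mult_vec cinner_diff_right cinner_scaleR_right cinner_scalar_right
        cinner_column_hermitian[OF herm] s_def)
  also have "\<dots> = cinner (w + t *s axis a 1) (A *v (w + t *s axis a 1))"
    unfolding quadratic_form_shift_axis[OF herm] s_def[symmetric] using r
    by (simp add: t_def field_simps)
  finally show "0 \<le> Re (cinner w ((A - (1/r) *\<^sub>R proj (\<chi> i. A $ i $ a)) *v w))"
    using psd by (simp add: psd_mat_def)
qed

lemma proj_scaleR: "proj (c *\<^sub>R u) = c\<^sup>2 *\<^sub>R proj u"
  by (simp add: proj_def vec_eq_iff scaleR_conv_of_real[where 'a=complex] power2_eq_square mult_ac)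

lemma psd_mat_sum_proj_supported:
  fixes A :: "complex^'n^'n"
  assumes "finite S" "hermitian_mat A" "psd_mat A" "\<And>x y. x \<notin> S \<or> y \<notin> S \<Longrightarrow> A $ x $ y = 0"
  shows "\<exists>vs. A = (\<Sum>v\<leftarrow>vs. proj v)"
  using assms
proof (induction S arbitrary: A rule: finite_induct)
  case empty
  then have "A = 0"
    by (simp add: vec_eq_iff)
  then show ?case
    by (intro exI[of _ "[]"]) simp
next
  case (insert a S)
  note herm = insert.prems(1) and psd = insert.prems(2) and supp = insert.prems(3)
  have "0 \<le> Re (A $ a $ a)"
    using psd unfolding psd_mat_def by (metis cinner_axis_left matrix_vector_mult_axis vec_lambda_beta)
  then consider "A $ a $ a = 0" | r where "A $ a $ a = of_real r" "r > 0"
    by (metis hermitian_mat_diag_real[OF herm] less_eq_real_def of_real_0)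
  then show ?case
  proof cases
    case 1
    have "A $ a $ y = 0" "A $ y $ a = 0" for y
      using psd_mat_zero_diag[OF herm psd 1] hermitian_mat_cnj_entry[OF herm, of a y] by auto
    then have "x \<notin> S \<or> y \<notin> S \<Longrightarrow> A $ x $ y = 0" for x y
      using supp by (metis insertE)
    then show ?thesis
      using insert.IH herm psd by blast
  next
    case 2
    define col where "col = (\<chi> i. A $ i $ a)"
    define B where "B = A - (1/r) *\<^sub>R proj col"
    have "hermitian_mat B"
      unfolding B_def by (intro hermitian_mat_diff herm hermitian_mat_scaleR hermitian_proj)
    moreover have "psd_mat B"
      unfolding B_def col_def by (rule psd_mat_schur_complement[OF herm psd 2])
    moreover have "B $ x $ y = 0" if xy: "x \<notin> S \<or> y \<notin> S" for x y
    proof -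
      have B_entry: "B $ x $ y = A $ x $ y - A $ x $ a * A $ a $ y / of_real r" for x y
        by (simp add: B_def col_def proj_def scaleR_conv_of_real[where 'a=complex]
            hermitian_mat_cnj_entry[OF herm])
      consider "x = a" | "y = a" | "x \<notin> insert a S \<or> y \<notin> insert a S"
        using xy by blast
      then show ?thesis
        by cases (use 2 supp in \<open>auto simp: B_entry\<close>)
    qed
    ultimately obtain vs where "B = (\<Sum>v\<leftarrow>vs. proj v)"
      using insert.IH by blast
    moreover have "A = B + proj ((1 / sqrt r) *\<^sub>R col)"
      using 2 by (simp add: B_def proj_scaleR power_divide)
    ultimately have "A = (\<Sum>v\<leftarrow>(1 / sqrt r) *\<^sub>R col # vs. proj v)"
      by (simp add: add.commute)
    then show ?thesis
      by blast
  qed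
qed

lemma psd_mat_sum_proj:
  fixes A :: "complex^'n^'n"
  assumes "hermitian_mat A" "psd_mat A"
  shows "\<exists>vs. A = (\<Sum>v\<leftarrow>vs. proj v)"
  using psd_mat_sum_proj_supported[of UNIV A] assms by simp

lemma trace_sum_proj: "trace (\<Sum>v\<leftarrow>vs. proj v) = of_real (\<Sum>v\<leftarrow>vs. norm v ^ 2)"
  by (induction vs)
    (simp_all add: trace_0[unfolded mat_0] trace_add proj_eq_outer trace_outer cinner_self)

lemma proj_sgn: "proj v = norm v ^ 2 *\<^sub>R proj (sgn v)"
proof (cases "v = 0")
  case True
  then show ?thesis
    by (simp add: proj_def vec_eq_iff)
next
  case False
  then have "norm v ^ 2 * inverse (norm v) ^ 2 = 1"
    by (simp flip: power_mult_distrib)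
  then show ?thesis
    by (simp add: sgn_div_norm proj_scaleR)
qed

lemma density_mat_ensemble_exists:
  assumes "density_mat \<rho>"
  shows "\<exists>E. ensemble \<rho> E"
proof -
  obtain vs where vs: "\<rho> = (\<Sum>v\<leftarrow>vs. proj v)"
    using assms psd_mat_sum_proj density_mat_psd unfolding density_mat_def by blast
  define us where "us = filter (\<lambda>v. v \<noteq> 0) vs"
  have "(\<Sum>v\<leftarrow>us. proj v) = \<rho>"
    unfolding vs us_def by (induction vs) (simp_all add: proj_def vec_eq_iff)
  moreover have "(\<Sum>v\<leftarrow>us. norm v ^ 2) = 1"
    using assms trace_sum_proj[of us] unfolding density_mat_def by (simp add: calculation)
  ultimately have "ensemble \<rho> (map (\<lambda>v. (norm v ^ 2, sgn v)) us)"
    by (auto simp: ensemble_def us_def norm_sgn o_def simp flip: proj_sgn)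
  then show ?thesis
    by blast
qed

lemma ensemble_weights_nonneg: "ensemble \<rho> E \<Longrightarrow> (p, \<psi>) \<in> set E \<Longrightarrow> 0 \<le> p"
  and ensemble_unit: "ensemble \<rho> E \<Longrightarrow> (p, \<psi>) \<in> set E \<Longrightarrow> norm \<psi> = 1"
  and ensemble_weights_sum: "ensemble \<rho> E \<Longrightarrow> (\<Sum>(p, \<psi>)\<leftarrow>E. p) = 1"
  by (auto simp: ensemble_def)

lemma sum_power4_le_one:
  assumes "norm (\<psi>::complex^'n) = 1"
  shows "(\<Sum>a\<in>UNIV. cmod (\<psi> $ a) ^ 4) \<le> 1"
proof -
  have "cmod (\<psi> $ a) ^ 2 \<le> 1" for a
    using member_le_sum[of a UNIV "\<lambda>a. cmod (\<psi> $ a) ^ 2"] unit_vec_sum_power2[OF assms]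
    by simp
  then have "cmod (\<psi> $ a) ^ 4 \<le> cmod (\<psi> $ a) ^ 2" for a
    using mult_left_le[of "cmod (\<psi> $ a) ^ 2" "cmod (\<psi> $ a) ^ 2"]
    by (simp flip: power_add)
  then have "(\<Sum>a\<in>UNIV. cmod (\<psi> $ a) ^ 4) \<le> (\<Sum>a\<in>UNIV. cmod (\<psi> $ a) ^ 2)"
    by (rule sum_mono)
  then show ?thesis
    using unit_vec_sum_power2[OF assms] by simp
qed

lemma ensemble_average_le_one:
  assumes E: "ensemble \<rho> E" and le: "\<And>\<psi>. norm \<psi> = 1 \<Longrightarrow> f \<psi> \<le> 1"
  shows "(\<Sum>(p, \<psi>)\<leftarrow>E. p * f \<psi>) \<le> 1"
proof -
  have "(\<Sum>(p, \<psi>)\<leftarrow>E. p * f \<psi>) \<le> (\<Sum>(p, \<psi>)\<leftarrow>E. p)"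
    by (rule sum_list_mono)
      (auto intro: mult_left_le le ensemble_unit[OF E] ensemble_weights_nonneg[OF E])
  then show ?thesis
    using ensemble_weights_sum[OF E] by simp
qed

lemma ensemble_average_affine:
  assumes "ensemble \<rho> E"
  shows "(\<Sum>(p, \<psi>)\<leftarrow>E. p * (c * (1 - f \<psi>))) = c * (1 - (\<Sum>(p, \<psi>)\<leftarrow>E. p * f \<psi>))"
proof -
  have "(\<Sum>(p, \<psi>)\<leftarrow>E'. p * (c * (1 - f \<psi>)))
      = c * ((\<Sum>(p, \<psi>)\<leftarrow>E'. p) - (\<Sum>(p, \<psi>)\<leftarrow>E'. p * f \<psi>))" for E'
    by (induction E') (auto simp: algebra_simps)
  then show ?thesis
    using ensemble_weights_sum[OF assms] by simp
qed

lemma ensemble_QFI_mean_phase_family: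
  fixes Z :: "'n::finite \<Rightarrow> complex^'n^'n"
  assumes herm: "\<And>j. hermitian_mat (Z j)"
    and diag: "\<And>j. diagonal_mat (Z j)"
    and orth: "\<And>j k. trace (Z j ** Z k) = (if j = k then 1 else 0)"
    and E: "ensemble \<rho> E"
  shows "(\<Sum>(p, \<psi>)\<leftarrow>E. p * QFI_mean (\<lambda>\<theta>'. Uphase Z \<theta>' ** proj \<psi> ** cadj (Uphase Z \<theta>')) \<theta>)
    = 4 / real CARD('n) * (1 - (\<Sum>(p, \<psi>)\<leftarrow>E. p * (\<Sum>j\<in>UNIV. cmod (\<psi> $ j) ^ 4)))"
    (is "_ = ?average")
proof -
  have "(\<Sum>(p, \<psi>)\<leftarrow>E. p * QFI_mean (\<lambda>\<theta>'. Uphase Z \<theta>' ** proj \<psi> ** cadj (Uphase Z \<theta>')) \<theta>)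
      = (\<Sum>(p, \<psi>)\<leftarrow>E. p * (4 / real CARD('n) * (1 - (\<Sum>j\<in>UNIV. cmod (\<psi> $ j) ^ 4))))"
    by (intro arg_cong[where f=sum_list] map_cong refl)
      (auto simp: QFI_mean_phase_family[OF herm diag orth] dest: ensemble_unit[OF E])
  also have "\<dots> = ?average"
    by (rule ensemble_average_affine[OF E])
  finally show ?thesis .
qed

theorem mainTheorem5:
  fixes Z :: "'n \<Rightarrow> complex^'n^'n" and \<rho> :: "complex^'n^'n" and \<theta> :: "real^'n"
  assumes herm: "\<And>j. hermitian_mat (Z j)"
    and diag: "\<And>j. diagonal_mat (Z j)"
    and orth: "\<And>j k. trace (Z j ** Z k) = (if j = k then 1 else 0)"
    and state: "density_mat \<rho>"
  shows "Ccoh Z \<theta> \<rho> = 4 / real CARD('n) *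
    (1 - (SUP E \<in> {E. ensemble \<rho> E}. (\<Sum>(p, \<psi>)\<leftarrow>E. p * (\<Sum>j\<in>UNIV. cmod (\<psi> $ j) ^ 4))))"
proof -
  define A where "A = {E. ensemble \<rho> E}"
  define g where "g E = (\<Sum>(p, \<psi>)\<leftarrow>E. p * (\<Sum>j\<in>UNIV. cmod (\<psi> $ j) ^ 4))"
    for E :: "(real \<times> (complex^'n)) list"
  define f where "f = (\<lambda>x::real. 4 / real CARD('n) * (1 - x))"
  have "Ccoh Z \<theta> \<rho> = (INF E\<in>A. f (g E))"
    unfolding Ccoh_def A_def f_def g_def
    by (intro INF_cong refl) (simp add: ensemble_QFI_mean_phase_family[OF herm diag orth])
  also have "\<dots> = f (SUP E\<in>A. g E)"
  proof -
    have "A \<noteq> {}"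
      using density_mat_ensemble_exists[OF state] by (simp add: A_def)
    moreover have "bdd_above (g ` A)"
      by (rule bdd_aboveI[of _ 1])
        (auto simp: A_def g_def intro: ensemble_average_le_one sum_power4_le_one)
    moreover have "antimono f"
      unfolding f_def antimono_def by (auto intro!: divide_right_mono)
    moreover have "continuous (at_left (Sup (g ` A))) f"
      unfolding f_def by (intro continuous_intros)
    ultimately show ?thesis
      using continuous_at_Sup_antimono[of f "g ` A"] by (simp add: image_image)
  qed
  finally show ?thesis
    by (simp add: f_def g_def A_def)
qed

end
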